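(* Let $(\theta_1,\theta_2)$ be as in the context and satisfy (A3). For any $k\in[\underline{\theta}_1,\overline{\theta}_1]$, the problem \[\max_{p_A,p_R\,:\,p_A\ge p_R}\ \mathbb{E}\big[\psi(\theta_1,\theta_2)\big(\mathbf{1}_{\theta_1\ge k}\mathbf{1}_{\theta_2\ge p_A}+\mathbf{1}_{\theta_1<k}\mathbf{1}_{\theta_2\ge p_R}\big)\big]-\mathbb{E}\big[(\theta_2-p_R)_+\mid\theta_1=\underline{\theta}_1\big]\] has an optimal solution with $p_A=p_R$.
   Context: $\theta_1\in[\underline{\theta}_1,\overline{\theta}_1]\subset\mathbb{R}_+$ has an absolutely continuous distribution $F_1$ with density $f_1>0$ on that interval; $\theta_2\in[\underline{\theta}_2,\overline{\theta}_2]\subset\mathbb{R}_+$ has conditional distribution $F_2(\theta_2\mid\theta_1)$, continuously differentiable in $(\theta_1,\theta_2)$ with conditional density $f_2(\theta_2\mid\theta_1)$. Impulse response $I(\theta_1,\theta_2)=-\frac{\partial F_2(\theta_2\mid\theta_1)/\partial\theta_1}{f_2(\theta_2\mid\theta_1)}$; second-period virtual value $\psi(\theta_1,\theta_2)=\theta_2-\frac{1-F_1(\theta_1)}{f_1(\theta_1)}I(\theta_1,\theta_2)$. (A3) Regularity: $\psi$ is non-decreasing in both $\theta_1$ and $\theta_2$. $(y)_+=\max\{y,0\}$. *)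

theory Defs
  imports "HOL-Analysis.Analysis"
begin

definition cdf1 :: "(real \<Rightarrow> real) \<Rightarrow> real \<Rightarrow> real \<Rightarrow> real" where
  "cdf1 f1 a1 t = integral {a1..t} f1"

text \<open>Impulse response  I(t1,t2) = - (dF2(t2|t1)/dt1) / f2(t2|t1);
  D1F2 t1 t2 is the partial derivative of F2(t2|t1) w.r.t. t1,
  f2 t1 t2 the conditional density f2(t2|t1).\<close>
definition impulse :: "(real \<Rightarrow> real \<Rightarrow> real) \<Rightarrow> (real \<Rightarrow> real \<Rightarrow> real) \<Rightarrow> real \<Rightarrow> real \<Rightarrow> real" where
  "impulse D1F2 f2 t1 t2 = - D1F2 t1 t2 / f2 t1 t2"

definition vvalue :: "(real \<Rightarrow> real) \<Rightarrow> real \<Rightarrow> (real \<Rightarrow> real \<Rightarrow> real) \<Rightarrow> (real \<Rightarrow> real \<Rightarrow> real)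
    \<Rightarrow> real \<Rightarrow> real \<Rightarrow> real" where
  "vvalue f1 a1 D1F2 f2 t1 t2 = t2 - (1 - cdf1 f1 a1 t1) / f1 t1 * impulse D1F2 f2 t1 t2"

definition expect :: "(real \<Rightarrow> real) \<Rightarrow> (real \<Rightarrow> real \<Rightarrow> real) \<Rightarrow> real \<Rightarrow> real \<Rightarrow> real \<Rightarrow> real
    \<Rightarrow> (real \<Rightarrow> real \<Rightarrow> real) \<Rightarrow> real" where
  "expect f1 f2 a1 b1 a2 b2 g =
     integral {a1..b1} (\<lambda>t1. integral {a2..b2} (\<lambda>t2. g t1 t2 * f2 t1 t2) * f1 t1)"

definition cond_expect_at :: "(real \<Rightarrow> real \<Rightarrow> real) \<Rightarrow> real \<Rightarrow> real \<Rightarrow> real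
    \<Rightarrow> (real \<Rightarrow> real) \<Rightarrow> real" where
  "cond_expect_at f2 t1 a2 b2 h = integral {a2..b2} (\<lambda>t2. h t2 * f2 t1 t2)"

definition objective :: "(real \<Rightarrow> real) \<Rightarrow> (real \<Rightarrow> real \<Rightarrow> real) \<Rightarrow> (real \<Rightarrow> real \<Rightarrow> real)
    \<Rightarrow> real \<Rightarrow> real \<Rightarrow> real \<Rightarrow> real \<Rightarrow> real \<Rightarrow> real \<Rightarrow> real \<Rightarrow> real" where
  "objective f1 D1F2 f2 a1 b1 a2 b2 k pA pR =
     expect f1 f2 a1 b1 a2 b2
       (\<lambda>t1 t2. vvalue f1 a1 D1F2 f2 t1 t2 *
          ((if k \<le> t1 then 1 else 0) * (if pA \<le> t2 then 1 else 0)
           + (if t1 < k then 1 else 0) * (if pR \<le> t2 then 1 else 0)))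
     - cond_expect_at f2 a1 a2 b2 (\<lambda>t2. max (t2 - pR) 0)"

end

theory Submission
  imports Defs
begin

text \<open>Write the objective as the integral over t1 of V(t1, p(t1)) minus the rent term, where
  V(t1, p) is f1(t1) times the integral of psi(t1, .) f2(t1, .) above the price p, and p(t1) is pA
  for t1 \<ge> k and pR below k. Since psi is nondecreasing in both arguments there is a cutoff
  \<tau> \<in> [pR, pA] such that psi \<ge> 0 for types t1 \<ge> k at prices in (\<tau>, pA) and psi \<le> 0 for
  types t1 < k at prices in [pR, \<tau>). Charging \<tau> to every type therefore only adds sales of
  nonnegative and removes sales of nonpositive virtual value, and it lowers the rent because
  \<tau> \<ge> pR. The single-price objective is Lipschitz in the price and does not decrease when the
  price is clamped to [a2, b2], so its maximum over [a2, b2] dominates every pair pR \<le> pA.\<close>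

lemma integral_le_except_negligible:
  fixes f g :: "'a::euclidean_space \<Rightarrow> real"
  assumes f: "f integrable_on S" and g: "g integrable_on S" and N: "negligible N"
    and le: "\<And>x. x \<in> S - N \<Longrightarrow> f x \<le> g x"
  shows "integral S f \<le> integral S g"
proof -
  define f' where "f' x = (if x \<in> N then g x else f x)" for x
  have "integral S f = integral S f'"
    using N by (rule integral_spike) (simp add: f'_def)
  also have "\<dots> \<le> integral S g"
  proof (rule integral_le)
    show "f' integrable_on S"
      using f N by (rule integrable_spike) (simp add: f'_def)
  qed (use g le in \<open>auto simp: f'_def\<close>)
  finally show ?thesis .
qed

lemma borel_measurable_fst_snd [measurable]:
  "(fst :: 'a::second_countable_topology \<times> 'b::second_countable_topology \<Rightarrow> 'a) \<in> borel_measurable borel"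
  "(snd :: 'a::second_countable_topology \<times> 'b::second_countable_topology \<Rightarrow> 'b) \<in> borel_measurable borel"
  by (metis borel_prod measurable_fst, metis borel_prod measurable_snd)

lemma
  fixes G :: "real \<times> real \<Rightarrow> real"
  assumes G [measurable]: "G \<in> borel_measurable borel" and bounded: "\<And>z. \<bar>G z\<bar> \<le> B"
  shows integrable_on_section: "(\<lambda>y. G (x, y)) integrable_on {a..b}"
    and borel_measurable_section_integral:
      "(\<lambda>x. integral {a..b} (\<lambda>y. G (x, y))) \<in> borel_measurable borel"
proof -
  have set_int: "set_integrable lborel {a..b} (\<lambda>y. G (x, y))" for x
    unfolding set_integrable_def
    by (rule integrableI_bounded_set_indicator[where B=B])
      (use bounded in \<open>auto simp: emeasure_lborel_Icc_eq\<close>)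
  then show "(\<lambda>y. G (x, y)) integrable_on {a..b}"
    by (rule set_borel_integral_eq_integral)
  have "(\<lambda>z. indicator {a..b} (snd z) *\<^sub>R G z) \<in> borel_measurable borel"
    by measurable
  then have "(\<lambda>(x, y). indicator {a..b} y *\<^sub>R G (x, y)) \<in> borel_measurable (lborel \<Otimes>\<^sub>M lborel)"
    unfolding lborel_prod by (simp add: case_prod_beta')
  then have "(\<lambda>x. LINT y : {a..b} | lborel. G (x, y)) \<in> borel_measurable lborel"
    unfolding set_lebesgue_integral_def by (rule lborel.borel_measurable_lebesgue_integral)
  then show "(\<lambda>x. integral {a..b} (\<lambda>y. G (x, y))) \<in> borel_measurable borel"
    using set_borel_integral_eq_integral(2)[OF set_int] by simp
qed

lemma integrable_indicator_atLeast_mult: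
  fixes g :: "real \<Rightarrow> real"
  assumes "g integrable_on {a..b}"
  shows "(\<lambda>y. indicator {p..} y * g y) integrable_on {a..b}"
proof -
  have "g integrable_on {max p a..b}"
    using assms by (rule integrable_on_subinterval) auto
  moreover have "{p..} \<inter> {a..b} = {max p a..b}"
    by auto
  moreover have "(\<lambda>y. indicator {p..} y * g y) = (\<lambda>y. if y \<in> {p..} then g y else 0)"
    by (auto simp: indicator_def)
  ultimately show ?thesis
    by (simp only: integrable_restrict_Int)
qed

lemma tail_integral_bound:
  fixes g :: "real \<Rightarrow> real"
  assumes "a \<le> b" and g: "g integrable_on {a..b}" and bound: "\<And>y. y \<in> {a..b} \<Longrightarrow> \<bar>g y\<bar> \<le> B"
  shows "\<bar>integral {a..b} (\<lambda>y. indicator {p..} y * g y)\<bar> \<le> B * (b - a)"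
proof -
  have "0 \<le> B"
    using bound[of a] \<open>a \<le> b\<close> by auto
  have "\<bar>integral {a..b} (\<lambda>y. indicator {p..} y * g y)\<bar> \<le> integral {a..b} (\<lambda>_. B)"
    using bound \<open>0 \<le> B\<close> by (intro integral_norm_bound_integral[where 'a=real, unfolded real_norm_def]
        integrable_indicator_atLeast_mult g) (auto simp: indicator_def)
  then show ?thesis
    using \<open>a \<le> b\<close> by (simp add: mult.commute)
qed

lemma tail_integral_lipschitz:
  fixes g :: "real \<Rightarrow> real"
  assumes "a \<le> b" and g: "g integrable_on {a..b}" and bound: "\<And>y. y \<in> {a..b} \<Longrightarrow> \<bar>g y\<bar> \<le> B"
  shows "\<bar>integral {a..b} (\<lambda>y. indicator {p..} y * g y) - integral {a..b} (\<lambda>y. indicator {q..} y * g y)\<bar>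
    \<le> B * \<bar>p - q\<bar>"
proof -
  have "0 \<le> B"
    using bound[of a] \<open>a \<le> b\<close> by auto
  have le: "\<bar>integral {a..b} (\<lambda>y. indicator {p..} y * g y) - integral {a..b} (\<lambda>y. indicator {q..} y * g y)\<bar>
      \<le> B * (q - p)" if "p \<le> q" for p q
  proof -
    have overlap: "{p..q} \<inter> {a..b} = {max p a..min q b}"
      by auto
    have "integral {a..b} (\<lambda>y. indicator {p..} y * g y) - integral {a..b} (\<lambda>y. indicator {q..} y * g y)
        = integral {a..b} (\<lambda>y. indicator {p..} y * g y - indicator {q..} y * g y)"
      by (intro integral_diff[symmetric] integrable_indicator_atLeast_mult g)
    also have "\<bar>\<dots>\<bar> \<le> integral {a..b} (\<lambda>y. if y \<in> {p..q} then B else 0)"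
    proof (intro integral_norm_bound_integral[where 'a=real, unfolded real_norm_def])
      show "(\<lambda>y. indicator {p..} y * g y - indicator {q..} y * g y) integrable_on {a..b}"
        by (intro integrable_diff integrable_indicator_atLeast_mult g)
      show "(\<lambda>y. if y \<in> {p..q} then B else 0) integrable_on {a..b}"
        by (simp only: integrable_restrict_Int overlap integrable_const_ivl)
    qed (use bound \<open>p \<le> q\<close> \<open>0 \<le> B\<close> in \<open>auto simp: indicator_def\<close>)
    also have "\<dots> \<le> B * (q - p)"
    proof -
      have "integral {a..b} (\<lambda>y. if y \<in> {p..q} then B else 0)
          = (if max p a \<le> min q b then min q b - max p a else 0) * B"
        by (simp only: integral_restrict_Int overlap integral_const_real content_real_if) simp
      moreover have "(if max p a \<le> min q b then min q b - max p a else 0) \<le> q - p"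
        using \<open>p \<le> q\<close> by auto
      ultimately show ?thesis
        using \<open>0 \<le> B\<close> by (simp add: mult.commute mult_left_mono)
    qed
    finally show ?thesis .
  qed
  show ?thesis
    using le[of p q] le[of q p] by (cases "p \<le> q") (auto simp: abs_minus_commute)
qed

lemma tail_integral_clamp:
  fixes g :: "real \<Rightarrow> real"
  shows "integral {a..b} (\<lambda>y. indicator {max a (min p b)..} y * g y)
    = integral {a..b} (\<lambda>y. indicator {p..} y * g y)"
proof (rule integral_spike[where S="{max a (min p b)}"])
  fix y assume "y \<in> {a..b} - {max a (min p b)}"
  then have "(max a (min p b) \<le> y) = (p \<le> y)"
    by (auto simp: max_def min_def)
  then show "indicator {p..} y * g y = indicator {max a (min p b)..} y * g y"
    by (simp add: indicator_def)
qed simp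

lemma continuous_on_integral_lipschitz_param:
  fixes f :: "real \<Rightarrow> 'a::euclidean_space \<Rightarrow> real"
  assumes f: "\<And>p. f p integrable_on S" and g: "g integrable_on S"
    and lipschitz: "\<And>p q x. x \<in> S \<Longrightarrow> \<bar>f p x - f q x\<bar> \<le> \<bar>p - q\<bar> * g x"
  shows "continuous_on UNIV (\<lambda>p. integral S (f p))"
proof (rule lipschitz_on_continuous_on, rule lipschitz_onI)
  show "0 \<le> integral S g"
    using g by (rule integral_nonneg) (use lipschitz[of _ 1 0] in force)
  fix p q :: real
  have "\<bar>integral S (f p) - integral S (f q)\<bar> = \<bar>integral S (\<lambda>x. f p x - f q x)\<bar>"
    using f by (simp add: integral_diff)
  also have "\<dots> \<le> integral S (\<lambda>x. \<bar>p - q\<bar> * g x)"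
    using f g lipschitz
    by (intro integral_norm_bound_integral[where 'a=real, unfolded real_norm_def]
        integrable_diff integrable_on_mult_right) auto
  also have "\<dots> = integral S g * \<bar>p - q\<bar>"
    by (simp add: mult.commute)
  finally show "dist (integral S (f p)) (integral S (f q)) \<le> integral S g * dist p q"
    by (simp add: dist_real_def)
qed

lemma exists_sign_cutoff:
  fixes \<psi> :: "real \<Rightarrow> real \<Rightarrow> real"
  assumes mono1: "\<And>x x' y. x \<in> A \<Longrightarrow> x' \<in> A \<Longrightarrow> y \<in> B \<Longrightarrow> x \<le> x' \<Longrightarrow> \<psi> x y \<le> \<psi> x' y"
    and mono2: "\<And>x y y'. x \<in> A \<Longrightarrow> y \<in> B \<Longrightarrow> y' \<in> B \<Longrightarrow> y \<le> y' \<Longrightarrow> \<psi> x y \<le> \<psi> x y'"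
    and "pR \<le> pA"
  obtains \<tau> where "pR \<le> \<tau>" "\<tau> \<le> pA"
    "\<And>x y. x \<in> A \<Longrightarrow> y \<in> B \<Longrightarrow> k \<le> x \<Longrightarrow> \<tau> < y \<Longrightarrow> y < pA \<Longrightarrow> 0 \<le> \<psi> x y"
    "\<And>x y. x \<in> A \<Longrightarrow> y \<in> B \<Longrightarrow> x < k \<Longrightarrow> pR \<le> y \<Longrightarrow> y < \<tau> \<Longrightarrow> \<psi> x y \<le> 0"
proof -
  define S where "S = {y \<in> B. pR \<le> y \<and> y < pA \<and> (\<exists>x\<in>A. k \<le> x \<and> \<psi> x y < 0)}"
  define \<tau> where "\<tau> = Sup (insert pR S)"
  have bdd: "bdd_above (insert pR S)"
    using \<open>pR \<le> pA\<close> unfolding S_def by (intro bdd_aboveI[of _ pA]) auto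
  show thesis
  proof
    show "pR \<le> \<tau>"
      unfolding \<tau>_def using bdd by (intro cSup_upper) auto
    show "\<tau> \<le> pA"
      unfolding \<tau>_def using \<open>pR \<le> pA\<close> by (intro cSup_least) (auto simp: S_def)
  next
    fix x y assume "x \<in> A" "y \<in> B" "k \<le> x" "\<tau> < y" "y < pA"
    show "0 \<le> \<psi> x y"
    proof (rule ccontr)
      assume "\<not> 0 \<le> \<psi> x y"
      moreover have "pR \<le> y"
        using \<open>\<tau> < y\<close> bdd unfolding \<tau>_def by (meson cSup_upper insertI1 less_imp_le order_trans)
      ultimately have "y \<in> S"
        using \<open>x \<in> A\<close> \<open>y \<in> B\<close> \<open>k \<le> x\<close> \<open>y < pA\<close> unfolding S_def by auto
      then have "y \<le> \<tau>"
        unfolding \<tau>_def using bdd by (intro cSup_upper) auto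
      then show False
        using \<open>\<tau> < y\<close> by simp
    qed
  next
    fix x y assume "x \<in> A" "y \<in> B" "x < k" "pR \<le> y" "y < \<tau>"
    then obtain s where "s \<in> insert pR S" "y < s"
      using less_cSup_iff[OF _ bdd] unfolding \<tau>_def by blast
    then have "s \<in> S"
      using \<open>pR \<le> y\<close> by auto
    then obtain x' where "s \<in> B" "x' \<in> A" "k \<le> x'" "\<psi> x' s < 0"
      unfolding S_def by auto
    have "\<psi> x y \<le> \<psi> x s"
      using mono2 \<open>x \<in> A\<close> \<open>y \<in> B\<close> \<open>s \<in> B\<close> \<open>y < s\<close> by simp
    also have "\<dots> \<le> \<psi> x' s"
      using mono1 \<open>x \<in> A\<close> \<open>x' \<in> A\<close> \<open>s \<in> B\<close> \<open>x < k\<close> \<open>k \<le> x'\<close> by simp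
    finally show "\<psi> x y \<le> 0"
      using \<open>\<psi> x' s < 0\<close> by simp
  qed
qed

lemma exists_dominating_cutoff:
  fixes \<psi> :: "real \<Rightarrow> real \<Rightarrow> real"
  assumes mono1: "\<And>x x' y. x \<in> A \<Longrightarrow> x' \<in> A \<Longrightarrow> y \<in> B \<Longrightarrow> x \<le> x' \<Longrightarrow> \<psi> x y \<le> \<psi> x' y"
    and mono2: "\<And>x y y'. x \<in> A \<Longrightarrow> y \<in> B \<Longrightarrow> y' \<in> B \<Longrightarrow> y \<le> y' \<Longrightarrow> \<psi> x y \<le> \<psi> x y'"
    and "pR \<le> pA"
  obtains \<tau> where "pR \<le> \<tau>"
    "\<And>x y. x \<in> A \<Longrightarrow> y \<in> B \<Longrightarrow> y \<noteq> \<tau> \<Longrightarrow>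
      indicator {if k \<le> x then pA else pR..} y * \<psi> x y \<le> indicator {\<tau>..} y * \<psi> x y"
proof (rule exists_sign_cutoff[OF mono1 mono2 \<open>pR \<le> pA\<close>, where k = k])
  fix \<tau> assume "pR \<le> \<tau>" "\<tau> \<le> pA"
    and above: "\<And>x y. x \<in> A \<Longrightarrow> y \<in> B \<Longrightarrow> k \<le> x \<Longrightarrow> \<tau> < y \<Longrightarrow> y < pA \<Longrightarrow> 0 \<le> \<psi> x y"
    and below: "\<And>x y. x \<in> A \<Longrightarrow> y \<in> B \<Longrightarrow> x < k \<Longrightarrow> pR \<le> y \<Longrightarrow> y < \<tau> \<Longrightarrow> \<psi> x y \<le> 0"
  show thesis
  proof (rule that[OF \<open>pR \<le> \<tau>\<close>])
    fix x y assume "x \<in> A" "y \<in> B" "y \<noteq> \<tau>"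
    show "indicator {if k \<le> x then pA else pR..} y * \<psi> x y \<le> indicator {\<tau>..} y * \<psi> x y"
    proof (cases "k \<le> x")
      case True
      consider "y < \<tau>" | "\<tau> < y" "y < pA" | "pA \<le> y"
        using \<open>y \<noteq> \<tau>\<close> by linarith
      then show ?thesis
      proof cases
        case 2
        then show ?thesis
          using above[OF \<open>x \<in> A\<close> \<open>y \<in> B\<close> True] by (simp add: indicator_def)
      qed (use True \<open>\<tau> \<le> pA\<close> in \<open>simp_all add: indicator_def\<close>)
    next
      case False
      consider "y < pR" | "pR \<le> y" "y < \<tau>" | "\<tau> < y"
        using \<open>y \<noteq> \<tau>\<close> by linarith
      then show ?thesis
      proof cases
        case 2
        then show ?thesis
          using below[OF \<open>x \<in> A\<close> \<open>y \<in> B\<close>] False by (simp add: indicator_def)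
      qed (use False \<open>pR \<le> \<tau>\<close> in \<open>simp_all add: indicator_def\<close>)
    qed
  qed
qed

locale sequential_screening =
  fixes a1 b1 a2 b2 :: real and f1 :: "real \<Rightarrow> real" and D1F2 f2 :: "real \<Rightarrow> real \<Rightarrow> real"
  assumes a1_le_b1: "a1 \<le> b1" and a2_le_b2: "a2 \<le> b2"
    and f1_pos: "\<And>t. t \<in> {a1..b1} \<Longrightarrow> 0 < f1 t"
    and f1_density: "(f1 has_integral 1) {a1..b1}"
    and D1F2_cont: "continuous_on ({a1..b1} \<times> {a2..b2}) (\<lambda>(x, y). D1F2 x y)"
    and f2_cont: "continuous_on ({a1..b1} \<times> {a2..b2}) (\<lambda>(x, y). f2 x y)"
    and f2_nonneg: "\<And>t1 t2. t1 \<in> {a1..b1} \<Longrightarrow> t2 \<in> {a2..b2} \<Longrightarrow> 0 \<le> f2 t1 t2"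
begin

abbreviation psi :: "real \<Rightarrow> real \<Rightarrow> real" where
  "psi \<equiv> vvalue f1 a1 D1F2 f2"

abbreviation F1 :: "real \<Rightarrow> real" where
  "F1 \<equiv> cdf1 f1 a1"

abbreviation rect :: "(real \<times> real) set" where
  "rect \<equiv> {a1..b1} \<times> {a2..b2}"

lemma psi_eq: "psi t1 t2 = t2 + (1 - F1 t1) / f1 t1 * (D1F2 t1 t2 / f2 t1 t2)"
  by (simp add: vvalue_def impulse_def)

lemma f1_integrable: "f1 integrable_on {a1..b1}"
  using f1_density by blast

lemma cdf1_bounds:
  assumes t: "t \<in> {a1..b1}"
  shows "0 \<le> F1 t" "F1 t \<le> 1"
proof -
  have nonneg: "0 \<le> integral S f1" if "S \<subseteq> {a1..b1}" "f1 integrable_on S" for S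
    using that by (intro integral_nonneg) (auto intro!: less_imp_le[OF f1_pos])
  have "integral {a1..t} f1 + integral {t..b1} f1 = integral {a1..b1} f1"
    using t f1_integrable by (intro Henstock_Kurzweil_Integration.integral_combine) auto
  also have "\<dots> = 1"
    using f1_density by (rule integral_unique)
  finally show "0 \<le> F1 t" "F1 t \<le> 1"
    using t nonneg[of "{a1..t}"] nonneg[of "{t..b1}"]
      integrable_on_subinterval[OF f1_integrable, of a1 t]
      integrable_on_subinterval[OF f1_integrable, of t b1]
    by (auto simp: cdf1_def)
qed

lemma continuous_on_cdf1: "continuous_on {a1..b1} F1"
  unfolding cdf1_def by (rule indefinite_integral_continuous_1[OF f1_integrable])

lemma sets_borel_rect: "rect \<in> sets borel"
  by (intro borel_closed closed_Times) auto

text \<open>On the rectangle psi * f2 = value_term + (1 - F1) / f1 * impulse_term (by psi_eq).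
  The product psi * f2 itself need not be Borel, since (1 - F1) / f1 is only Lebesgue measurable;
  extended by zero outside the rectangle, the two terms are bounded Borel functions on the plane,
  so their section integrals are measurable in t1. Because x / 0 = 0, impulse_term is D1F2 where
  f2 \<noteq> 0 and 0 elsewhere.\<close>

definition value_term :: "real \<times> real \<Rightarrow> real" where
  "value_term z = indicator rect z * (snd z * f2 (fst z) (snd z))"

definition impulse_term :: "real \<times> real \<Rightarrow> real" where
  "impulse_term z =
    indicator rect z * (D1F2 (fst z) (snd z) / f2 (fst z) (snd z) * f2 (fst z) (snd z))"

lemma borel_measurable_value_term [measurable]: "value_term \<in> borel_measurable borel"
proof -
  have "continuous_on rect (\<lambda>z. snd z * f2 (fst z) (snd z))"
    using f2_cont by (intro continuous_intros) (simp add: case_prod_beta')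
  then show ?thesis
    unfolding value_term_def[abs_def]
    by (intro borel_measurable_continuous_on_indicator[where 'b=real, unfolded real_scaleR_def]
        sets_borel_rect)
qed

lemma borel_measurable_impulse_term [measurable]: "impulse_term \<in> borel_measurable borel"
proof -
  have [measurable]: "(\<lambda>z. indicator rect z * f2 (fst z) (snd z)) \<in> borel_measurable borel"
    using f2_cont
    by (intro borel_measurable_continuous_on_indicator[where 'b=real, unfolded real_scaleR_def]
        sets_borel_rect) (simp add: case_prod_beta')
  have [measurable]: "(\<lambda>z. indicator rect z * D1F2 (fst z) (snd z)) \<in> borel_measurable borel"
    using D1F2_cont
    by (intro borel_measurable_continuous_on_indicator[where 'b=real, unfolded real_scaleR_def]
        sets_borel_rect) (simp add: case_prod_beta')
  have "impulse_term = (\<lambda>z. (indicator rect z * D1F2 (fst z) (snd z))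
      / (indicator rect z * f2 (fst z) (snd z)) * (indicator rect z * f2 (fst z) (snd z)))"
    by (auto simp: impulse_term_def indicator_def fun_eq_iff)
  also have "\<dots> \<in> borel_measurable borel"
    by measurable
  finally show ?thesis .
qed

lemma terms_bounded:
  obtains B where "\<And>z. \<bar>value_term z\<bar> \<le> B" "\<And>z. \<bar>impulse_term z\<bar> \<le> B"
proof -
  have bounded: "\<exists>B>0. \<forall>z\<in>rect. \<bar>g z\<bar> \<le> B" if "continuous_on rect g" for g :: "real \<times> real \<Rightarrow> real"
    using compact_imp_bounded[OF compact_continuous_image[OF that]]
    by (auto simp: bounded_pos compact_Times)
  have "continuous_on rect (\<lambda>z. snd z * f2 (fst z) (snd z))"
    using f2_cont by (intro continuous_intros) (simp add: case_prod_beta')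
  then obtain B0 where "B0 > 0" and B0: "\<forall>z\<in>rect. \<bar>snd z * f2 (fst z) (snd z)\<bar> \<le> B0"
    using bounded by blast
  have "continuous_on rect (\<lambda>z. D1F2 (fst z) (snd z))"
    using D1F2_cont by (simp add: case_prod_beta')
  then obtain B1 where "B1 > 0" and B1: "\<forall>z\<in>rect. \<bar>D1F2 (fst z) (snd z)\<bar> \<le> B1"
    using bounded by blast
  have "\<bar>D1F2 x y / f2 x y * f2 x y\<bar> \<le> \<bar>D1F2 x y\<bar>" for x y
    by (cases "f2 x y = 0") simp_all
  then show thesis
    using B0 B1 \<open>B0 > 0\<close> \<open>B1 > 0\<close>
    by (intro that[of "B0 + B1"]) (force simp: value_term_def impulse_term_def indicator_def)+
qed

definition tail :: "(real \<times> real \<Rightarrow> real) \<Rightarrow> real \<Rightarrow> real \<Rightarrow> real" where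
  "tail G t1 p = integral {a2..b2} (\<lambda>t2. indicator {p..} t2 * G (t1, t2))"

context
  fixes G :: "real \<times> real \<Rightarrow> real" and B :: real
  assumes G_borel: "G \<in> borel_measurable borel" and G_bound: "\<And>z. \<bar>G z\<bar> \<le> B"
begin

lemma integrable_tail_integrand: "(\<lambda>t2. indicator {p..} t2 * G (t1, t2)) integrable_on {a2..b2}"
  by (rule integrable_indicator_atLeast_mult[OF integrable_on_section[OF G_borel G_bound]])

lemma borel_measurable_tail:
  assumes [measurable]: "\<pi> \<in> borel_measurable borel"
  shows "(\<lambda>t1. tail G t1 (\<pi> t1)) \<in> borel_measurable borel"
proof -
  have [measurable]: "G \<in> borel_measurable borel"
    by (rule G_borel)
  have "(\<lambda>z. if \<pi> (fst z) \<le> snd z then G z else 0) \<in> borel_measurable borel"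
    by measurable
  moreover have "\<bar>if \<pi> (fst z) \<le> snd z then G z else 0\<bar> \<le> B" for z
    using G_bound[of z] by auto
  ultimately have "(\<lambda>t1. integral {a2..b2} (\<lambda>t2. (\<lambda>z. if \<pi> (fst z) \<le> snd z then G z else 0) (t1, t2)))
      \<in> borel_measurable borel"
    by (rule borel_measurable_section_integral)
  moreover have "indicator {\<pi> t1..} t2 * G (t1, t2) = (if \<pi> t1 \<le> t2 then G (t1, t2) else 0)"
    for t1 t2
    by (cases "\<pi> t1 \<le> t2") auto
  ultimately show ?thesis
    by (simp add: tail_def)
qed

lemma tail_bound: "\<bar>tail G t1 p\<bar> \<le> B * (b2 - a2)"
  unfolding tail_def using a2_le_b2 integrable_on_section[OF G_borel G_bound] G_bound
  by (rule tail_integral_bound)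

lemma tail_lipschitz: "\<bar>tail G t1 p - tail G t1 q\<bar> \<le> B * \<bar>p - q\<bar>"
  unfolding tail_def using a2_le_b2 integrable_on_section[OF G_borel G_bound] G_bound
  by (rule tail_integral_lipschitz)

end

definition virtual_revenue :: "real \<Rightarrow> real \<Rightarrow> real" where
  "virtual_revenue t1 p = integral {a2..b2} (\<lambda>t2. indicator {p..} t2 * (psi t1 t2 * f2 t1 t2)) * f1 t1"

definition rent :: "real \<Rightarrow> real" where
  "rent p = cond_expect_at f2 a1 a2 b2 (\<lambda>t2. max (t2 - p) 0)"

lemma objective_eq:
  "objective f1 D1F2 f2 a1 b1 a2 b2 k pA pR
    = integral {a1..b1} (\<lambda>t1. virtual_revenue t1 (if k \<le> t1 then pA else pR)) - rent pR"
proof -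
  have "(\<lambda>t2. psi t1 t2 * ((if k \<le> t1 then 1 else 0) * (if pA \<le> t2 then 1 else 0)
        + (if t1 < k then 1 else 0) * (if pR \<le> t2 then 1 else 0)) * f2 t1 t2)
      = (\<lambda>t2. indicator {if k \<le> t1 then pA else pR..} t2 * (psi t1 t2 * f2 t1 t2))" for t1
    by (auto simp: indicator_def fun_eq_iff)
  then show ?thesis
    unfolding objective_def expect_def virtual_revenue_def rent_def by simp
qed

lemma has_integral_virtual_revenue_integrand:
  assumes t1: "t1 \<in> {a1..b1}"
  shows "((\<lambda>t2. indicator {p..} t2 * (psi t1 t2 * f2 t1 t2)) has_integral
      tail value_term t1 p + (1 - F1 t1) / f1 t1 * tail impulse_term t1 p) {a2..b2}"
proof -
  obtain B where B: "\<And>z. \<bar>value_term z\<bar> \<le> B" "\<And>z. \<bar>impulse_term z\<bar> \<le> B"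
    using terms_bounded by blast
  have "((\<lambda>t2. indicator {p..} t2 * value_term (t1, t2)
      + (1 - F1 t1) / f1 t1 * (indicator {p..} t2 * impulse_term (t1, t2))) has_integral
      tail value_term t1 p + (1 - F1 t1) / f1 t1 * tail impulse_term t1 p) {a2..b2}"
    unfolding tail_def
    by (intro has_integral_add has_integral_mult_right integrable_integral
        integrable_tail_integrand[OF borel_measurable_value_term B(1)]
        integrable_tail_integrand[OF borel_measurable_impulse_term B(2)])
  then show ?thesis
  proof (rule has_integral_eq[rotated])
    fix t2 assume "t2 \<in> {a2..b2}"
    with t1 have "indicator rect (t1, t2) = (1::real)"
      by simp
    then show "indicator {p..} t2 * value_term (t1, t2)
        + (1 - F1 t1) / f1 t1 * (indicator {p..} t2 * impulse_term (t1, t2))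
        = indicator {p..} t2 * (psi t1 t2 * f2 t1 t2)"
      unfolding value_term_def impulse_term_def psi_eq
      by (simp only: fst_conv snd_conv mult_1 distrib_left distrib_right mult_ac)
  qed
qed

lemma virtual_revenue_eq:
  assumes t1: "t1 \<in> {a1..b1}"
  shows "virtual_revenue t1 p = f1 t1 * tail value_term t1 p + (1 - F1 t1) * tail impulse_term t1 p"
  using integral_unique[OF has_integral_virtual_revenue_integrand[OF t1]] f1_pos[OF t1]
  by (simp add: virtual_revenue_def field_simps)

lemma abs_survival_mult_le:
  assumes "t1 \<in> {a1..b1}"
  shows "\<bar>(1 - F1 t1) * x\<bar> \<le> \<bar>x\<bar>"
  using cdf1_bounds[OF assms] by (simp add: abs_mult mult_left_le_one_le)

lemma integrable_virtual_revenue: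
  assumes \<pi>: "\<pi> \<in> borel_measurable borel"
  shows "(\<lambda>t1. virtual_revenue t1 (\<pi> t1)) integrable_on {a1..b1}"
proof -
  obtain B where B: "\<And>z. \<bar>value_term z\<bar> \<le> B" "\<And>z. \<bar>impulse_term z\<bar> \<le> B"
    using terms_bounded by blast
  define C where "C = B * (b2 - a2)"
  have lebesgue: "h \<in> borel_measurable (lebesgue_on {a1..b1})" if "h \<in> borel_measurable borel"
    for h :: "real \<Rightarrow> real"
    using that by (simp add: measurable_completion measurable_restrict_space1)
  have "(\<lambda>t1. f1 t1 * tail value_term t1 (\<pi> t1) + (1 - F1 t1) * tail impulse_term t1 (\<pi> t1))
      \<in> borel_measurable (lebesgue_on {a1..b1})"
    using integrable_imp_measurable[OF f1_integrable]
      continuous_imp_measurable_on_sets_lebesgue[OF continuous_on_cdf1]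
      lebesgue[OF borel_measurable_tail[OF borel_measurable_value_term B(1) \<pi>]]
      lebesgue[OF borel_measurable_tail[OF borel_measurable_impulse_term B(2) \<pi>]]
    by (intro borel_measurable_add borel_measurable_times borel_measurable_diff) auto
  then have measurable: "(\<lambda>t1. virtual_revenue t1 (\<pi> t1)) \<in> borel_measurable (lebesgue_on {a1..b1})"
    by (subst measurable_lebesgue_cong) (auto simp: virtual_revenue_eq)
  have bound: "\<bar>virtual_revenue t1 (\<pi> t1)\<bar> \<le> f1 t1 * C + C" if t1: "t1 \<in> {a1..b1}" for t1
  proof -
    have "\<bar>f1 t1 * tail value_term t1 (\<pi> t1)\<bar> \<le> f1 t1 * C"
      using tail_bound[OF borel_measurable_value_term B(1)] f1_pos[OF t1]
      by (simp add: abs_mult C_def mult_left_mono)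
    moreover have "\<bar>(1 - F1 t1) * tail impulse_term t1 (\<pi> t1)\<bar> \<le> C"
      using abs_survival_mult_le[OF t1] tail_bound[OF borel_measurable_impulse_term B(2)]
      unfolding C_def by (rule order_trans)
    ultimately show ?thesis
      unfolding virtual_revenue_eq[OF t1] by linarith
  qed
  have "(\<lambda>t1. f1 t1 * C + C) integrable_on {a1..b1}"
    by (intro integrable_add integrable_on_mult_left f1_integrable integrable_const_ivl)
  then show ?thesis
    using measurable_bounded_by_integrable_imp_absolutely_integrable[OF measurable] bound
    by (auto simp: absolutely_integrable_on_def)
qed

lemma virtual_revenue_lipschitz:
  obtains B where "\<And>t1 p q. t1 \<in> {a1..b1} \<Longrightarrow>
    \<bar>virtual_revenue t1 p - virtual_revenue t1 q\<bar> \<le> \<bar>p - q\<bar> * (f1 t1 * B + B)"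
proof -
  obtain B where B: "\<And>z. \<bar>value_term z\<bar> \<le> B" "\<And>z. \<bar>impulse_term z\<bar> \<le> B"
    using terms_bounded by blast
  show thesis
  proof (rule that)
    fix t1 p q assume t1: "t1 \<in> {a1..b1}"
    have "\<bar>f1 t1 * (tail value_term t1 p - tail value_term t1 q)\<bar> \<le> f1 t1 * (B * \<bar>p - q\<bar>)"
      using tail_lipschitz[OF borel_measurable_value_term B(1)] f1_pos[OF t1]
      by (simp add: abs_mult mult_left_mono)
    moreover have "\<bar>(1 - F1 t1) * (tail impulse_term t1 p - tail impulse_term t1 q)\<bar> \<le> B * \<bar>p - q\<bar>"
      using abs_survival_mult_le[OF t1] tail_lipschitz[OF borel_measurable_impulse_term B(2)]
      by (rule order_trans)
    ultimately show "\<bar>virtual_revenue t1 p - virtual_revenue t1 q\<bar> \<le> \<bar>p - q\<bar> * (f1 t1 * B + B)"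
      unfolding virtual_revenue_eq[OF t1]
      by (simp add: algebra_simps order_trans[OF abs_triangle_ineq])
  qed
qed

lemma continuous_on_density_at_a1: "continuous_on {a2..b2} (f2 a1)"
proof -
  have "continuous_on {a2..b2} ((\<lambda>(x, y). f2 x y) \<circ> (\<lambda>t2. (a1, t2)))"
    using a1_le_b1
    by (intro continuous_on_compose continuous_intros continuous_on_subset[OF f2_cont]) auto
  then show ?thesis
    by (simp add: comp_def)
qed

lemma integrable_rent_integrand: "(\<lambda>t2. max (t2 - p) 0 * f2 a1 t2) integrable_on {a2..b2}"
  by (intro integrable_continuous_interval continuous_intros continuous_on_density_at_a1)

lemma rent_le:
  assumes "\<And>t2. t2 \<in> {a2..b2} \<Longrightarrow> max (t2 - q) 0 \<le> max (t2 - p) 0"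
  shows "rent q \<le> rent p"
  unfolding rent_def cond_expect_at_def
  using assms a1_le_b1 f2_nonneg
  by (intro integral_le integrable_rent_integrand mult_right_mono) auto

lemma continuous_rent: "continuous_on UNIV rent"
  unfolding rent_def[abs_def] cond_expect_at_def
proof (rule continuous_on_integral_lipschitz_param)
  show "(\<lambda>t2. \<bar>f2 a1 t2\<bar>) integrable_on {a2..b2}"
    by (intro integrable_continuous_interval continuous_intros continuous_on_density_at_a1)
  fix p q t2 :: real
  have "\<bar>max (t2 - p) 0 - max (t2 - q) 0\<bar> \<le> \<bar>p - q\<bar>"
    by (simp add: max_def abs_if)
  then show "\<bar>max (t2 - p) 0 * f2 a1 t2 - max (t2 - q) 0 * f2 a1 t2\<bar> \<le> \<bar>p - q\<bar> * \<bar>f2 a1 t2\<bar>"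
    by (simp add: left_diff_distrib[symmetric] abs_mult mult_right_mono)
qed (rule integrable_rent_integrand)

lemma continuous_uniform_objective:
  "continuous_on UNIV (\<lambda>p. objective f1 D1F2 f2 a1 b1 a2 b2 k p p)"
proof -
  obtain B where B: "\<And>t1 p q. t1 \<in> {a1..b1} \<Longrightarrow>
      \<bar>virtual_revenue t1 p - virtual_revenue t1 q\<bar> \<le> \<bar>p - q\<bar> * (f1 t1 * B + B)"
    using virtual_revenue_lipschitz by blast
  have "continuous_on UNIV (\<lambda>p. integral {a1..b1} (\<lambda>t1. virtual_revenue t1 p))"
  proof (rule continuous_on_integral_lipschitz_param)
    show "(\<lambda>t1. virtual_revenue t1 p) integrable_on {a1..b1}" for p
      using integrable_virtual_revenue[of "\<lambda>_. p"] by simp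
    show "(\<lambda>t1. f1 t1 * B + B) integrable_on {a1..b1}"
      by (intro integrable_add integrable_on_mult_left f1_integrable integrable_const_ivl)
  qed (rule B)
  then show ?thesis
    unfolding objective_eq if_cancel by (intro continuous_on_diff continuous_rent)
qed

lemma uniform_objective_le_clamp:
  "objective f1 D1F2 f2 a1 b1 a2 b2 k p p
    \<le> objective f1 D1F2 f2 a1 b1 a2 b2 k (max a2 (min p b2)) (max a2 (min p b2))"
proof -
  have "virtual_revenue t1 (max a2 (min p b2)) = virtual_revenue t1 p" for t1
    unfolding virtual_revenue_def by (simp only: tail_integral_clamp)
  moreover have "rent (max a2 (min p b2)) \<le> rent p"
    by (rule rent_le) auto
  ultimately show ?thesis
    by (simp add: objective_eq)
qed

lemma objective_le_uniform_cutoff: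
  assumes mono1: "\<And>t1 t1' t2. t1 \<in> {a1..b1} \<Longrightarrow> t1' \<in> {a1..b1} \<Longrightarrow> t2 \<in> {a2..b2} \<Longrightarrow>
      t1 \<le> t1' \<Longrightarrow> psi t1 t2 \<le> psi t1' t2"
    and mono2: "\<And>t1 t2 t2'. t1 \<in> {a1..b1} \<Longrightarrow> t2 \<in> {a2..b2} \<Longrightarrow> t2' \<in> {a2..b2} \<Longrightarrow>
      t2 \<le> t2' \<Longrightarrow> psi t1 t2 \<le> psi t1 t2'"
    and "pR \<le> pA"
  obtains \<tau> where "objective f1 D1F2 f2 a1 b1 a2 b2 k pA pR \<le> objective f1 D1F2 f2 a1 b1 a2 b2 k \<tau> \<tau>"
proof (rule exists_dominating_cutoff[OF mono1 mono2 \<open>pR \<le> pA\<close>, where k = k])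
  fix \<tau> assume "pR \<le> \<tau>" and dominates: "\<And>t1 t2. t1 \<in> {a1..b1} \<Longrightarrow> t2 \<in> {a2..b2} \<Longrightarrow> t2 \<noteq> \<tau> \<Longrightarrow>
      indicator {if k \<le> t1 then pA else pR..} t2 * psi t1 t2 \<le> indicator {\<tau>..} t2 * psi t1 t2"
  define \<pi> where "\<pi> t1 = (if k \<le> t1 then pA else pR)" for t1
  have \<pi>_borel: "\<pi> \<in> borel_measurable borel"
    unfolding \<pi>_def[abs_def] by measurable
  have "virtual_revenue t1 (\<pi> t1) \<le> virtual_revenue t1 \<tau>" if t1: "t1 \<in> {a1..b1}" for t1
  proof -
    have "integral {a2..b2} (\<lambda>t2. indicator {\<pi> t1..} t2 * (psi t1 t2 * f2 t1 t2))
        \<le> integral {a2..b2} (\<lambda>t2. indicator {\<tau>..} t2 * (psi t1 t2 * f2 t1 t2))"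
    proof (rule integral_le_except_negligible[where N = "{\<tau>}"])
      fix t2 assume "t2 \<in> {a2..b2} - {\<tau>}"
      then show "indicator {\<pi> t1..} t2 * (psi t1 t2 * f2 t1 t2)
          \<le> indicator {\<tau>..} t2 * (psi t1 t2 * f2 t1 t2)"
        using mult_right_mono[OF dominates[OF t1] f2_nonneg[OF t1]] by (simp add: \<pi>_def mult.assoc)
    qed (use has_integral_virtual_revenue_integrand[OF t1] in blast)+
    then show ?thesis
      unfolding virtual_revenue_def using f1_pos[OF t1] by (simp add: mult_right_mono)
  qed
  then have "integral {a1..b1} (\<lambda>t1. virtual_revenue t1 (\<pi> t1))
      \<le> integral {a1..b1} (\<lambda>t1. virtual_revenue t1 \<tau>)"
    using integrable_virtual_revenue[OF \<pi>_borel] integrable_virtual_revenue[of "\<lambda>_. \<tau>"]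
    by (intro integral_le) auto
  moreover have "rent \<tau> \<le> rent pR"
    using \<open>pR \<le> \<tau>\<close> by (intro rent_le) auto
  ultimately show thesis
    unfolding \<pi>_def by (intro that[of \<tau>]) (simp add: objective_eq)
qed

theorem exists_optimal_uniform_price:
  assumes mono1: "\<And>t1 t1' t2. t1 \<in> {a1..b1} \<Longrightarrow> t1' \<in> {a1..b1} \<Longrightarrow> t2 \<in> {a2..b2} \<Longrightarrow>
      t1 \<le> t1' \<Longrightarrow> psi t1 t2 \<le> psi t1' t2"
    and mono2: "\<And>t1 t2 t2'. t1 \<in> {a1..b1} \<Longrightarrow> t2 \<in> {a2..b2} \<Longrightarrow> t2' \<in> {a2..b2} \<Longrightarrow>
      t2 \<le> t2' \<Longrightarrow> psi t1 t2 \<le> psi t1 t2'"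
  shows "\<exists>p. \<forall>pA pR. pR \<le> pA \<longrightarrow>
    objective f1 D1F2 f2 a1 b1 a2 b2 k pA pR \<le> objective f1 D1F2 f2 a1 b1 a2 b2 k p p"
proof -
  have "\<exists>p\<in>{a2..b2}. \<forall>q\<in>{a2..b2}.
      objective f1 D1F2 f2 a1 b1 a2 b2 k q q \<le> objective f1 D1F2 f2 a1 b1 a2 b2 k p p"
    using a2_le_b2
    by (intro continuous_attains_sup continuous_on_subset[OF continuous_uniform_objective]) auto
  then obtain p where p: "\<And>q. q \<in> {a2..b2} \<Longrightarrow>
      objective f1 D1F2 f2 a1 b1 a2 b2 k q q \<le> objective f1 D1F2 f2 a1 b1 a2 b2 k p p"
    by blast
  have "objective f1 D1F2 f2 a1 b1 a2 b2 k pA pR \<le> objective f1 D1F2 f2 a1 b1 a2 b2 k p p"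
    if "pR \<le> pA" for pA pR
  proof -
    obtain \<tau> where "objective f1 D1F2 f2 a1 b1 a2 b2 k pA pR \<le> objective f1 D1F2 f2 a1 b1 a2 b2 k \<tau> \<tau>"
      using objective_le_uniform_cutoff[OF mono1 mono2 \<open>pR \<le> pA\<close>] by blast
    also have "\<dots> \<le> objective f1 D1F2 f2 a1 b1 a2 b2 k (max a2 (min \<tau> b2)) (max a2 (min \<tau> b2))"
      by (rule uniform_objective_le_clamp)
    also have "\<dots> \<le> objective f1 D1F2 f2 a1 b1 a2 b2 k p p"
      using a2_le_b2 by (intro p) auto
    finally show ?thesis .
  qed
  then show ?thesis
    by blast
qed

end

theorem claim1:
  fixes a1 b1 a2 b2 k :: real
    and f1 :: "real \<Rightarrow> real"
    and F2 D1F2 f2 :: "real \<Rightarrow> real \<Rightarrow> real"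
  assumes a1_nonneg: "0 \<le> a1" and a1b1: "a1 < b1"
    and a2_nonneg: "0 \<le> a2" and a2b2: "a2 < b2"
    and f1_pos: "\<forall>t\<in>{a1..b1}. 0 < f1 t"
    and f1_density: "(f1 has_integral 1) {a1..b1}"
    and F2_deriv: "\<forall>t1\<in>{a1..b1}. \<forall>t2\<in>{a2..b2}.
        ((\<lambda>(x, y). F2 x y) has_derivative (\<lambda>(h1, h2). D1F2 t1 t2 * h1 + f2 t1 t2 * h2))
          (at (t1, t2) within ({a1..b1} \<times> {a2..b2}))"
    and D1F2_cont: "continuous_on ({a1..b1} \<times> {a2..b2}) (\<lambda>(x, y). D1F2 x y)"
    and f2_cont: "continuous_on ({a1..b1} \<times> {a2..b2}) (\<lambda>(x, y). f2 x y)"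
    and f2_nonneg: "\<forall>t1\<in>{a1..b1}. \<forall>t2\<in>{a2..b2}. 0 \<le> f2 t1 t2"
    and F2_low: "\<forall>t1\<in>{a1..b1}. F2 t1 a2 = 0"
    and F2_high: "\<forall>t1\<in>{a1..b1}. F2 t1 b2 = 1"
    and A3_mono1: "\<forall>t1\<in>{a1..b1}. \<forall>t1'\<in>{a1..b1}. \<forall>t2\<in>{a2..b2}.
        t1 \<le> t1' \<longrightarrow> vvalue f1 a1 D1F2 f2 t1 t2 \<le> vvalue f1 a1 D1F2 f2 t1' t2"
    and A3_mono2: "\<forall>t1\<in>{a1..b1}. \<forall>t2\<in>{a2..b2}. \<forall>t2'\<in>{a2..b2}.
        t2 \<le> t2' \<longrightarrow> vvalue f1 a1 D1F2 f2 t1 t2 \<le> vvalue f1 a1 D1F2 f2 t1 t2'"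
    and k_range: "k \<in> {a1..b1}"
  shows "\<exists>p::real. \<forall>pA pR::real. pR \<le> pA \<longrightarrow>
           objective f1 D1F2 f2 a1 b1 a2 b2 k pA pR \<le> objective f1 D1F2 f2 a1 b1 a2 b2 k p p"
proof -
  \<comment> \<open>F2 enters the objective only through D1F2 and f2.\<close>
  interpret sequential_screening a1 b1 a2 b2 f1 D1F2 f2
    using a1b1 a2b2 f1_pos f1_density D1F2_cont f2_cont f2_nonneg by unfold_locales auto
  show ?thesis
    using exists_optimal_uniform_price[OF A3_mono1[rule_format] A3_mono2[rule_format]] .
qed

end
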